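(* Let $p,q$ be distinct primes and let $(G,H,T)$ be the envelope of a right conjugacy closed loop of order $pq$. Let $K$ be a subgroup with $H\lneq K\lneq G$, $|G:K|=q$ and $|K:H|=p$. Put $T_1=T\cap K$, $K_1=\langle T_1\rangle$ and $H_1=H\cap K_1$. Then $(K_1,H_1,T_1)$ is an RCC loop folder of order $p$ and $K_1$ is abelian. Moreover $K_1\trianglelefteq K$, $K=HK_1$, and $H_1\trianglelefteq K$.
   Context: For a finite loop $\mathcal{L}$ with identity $e$: $G=\langle R_a\mid a\in\mathcal L\rangle$ with $R_a\colon x\mapsto xa$, $H$ the stabilizer of $e$, $T=\{R_a\}$; $(G,H,T)$ is the envelope; the loop is right conjugacy closed if $T$ is a union of conjugacy classes of $G$. A loop folder is a triple $(G,H,T)$ with $G$ finite, $H\le G$, $1\in T\subseteq G$, $T$ a set of representatives of the right cosets $H^g\backslash G$ for every $g\in G$; RCC loop folder if $T$ is $G$-conjugation invariant; order $|T|$. *)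

theory Defs
  imports "HOL-Algebra.Algebra"
begin

definition loop :: "'a set \<Rightarrow> ('a \<Rightarrow> 'a \<Rightarrow> 'a) \<Rightarrow> 'a \<Rightarrow> bool" where
  "loop L m e \<longleftrightarrow>
     e \<in> L \<and> (\<forall>x\<in>L. \<forall>y\<in>L. m x y \<in> L) \<and>
     (\<forall>x\<in>L. m e x = x \<and> m x e = x) \<and>
     (\<forall>a\<in>L. \<forall>b\<in>L. \<exists>!x. x \<in> L \<and> m a x = b) \<and>
     (\<forall>a\<in>L. \<forall>b\<in>L. \<exists>!y. y \<in> L \<and> m y a = b)"

text \<open>Permutations of S acting on the right: f \<otimes> g means first f, then g.\<close>
definition RBijGroup :: "'a set \<Rightarrow> ('a \<Rightarrow> 'a) monoid" where
  "RBijGroup S = \<lparr>carrier = Bij S, monoid.mult = (\<lambda>f g. compose S g f), one = (\<lambda>x\<in>S. x)\<rparr>"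

definition rtrans :: "'a set \<Rightarrow> ('a \<Rightarrow> 'a \<Rightarrow> 'a) \<Rightarrow> 'a \<Rightarrow> ('a \<Rightarrow> 'a)" where
  "rtrans L m a = (\<lambda>x\<in>L. m x a)"

definition env_T :: "'a set \<Rightarrow> ('a \<Rightarrow> 'a \<Rightarrow> 'a) \<Rightarrow> ('a \<Rightarrow> 'a) set" where
  "env_T L m = rtrans L m ` L"

definition env_G :: "'a set \<Rightarrow> ('a \<Rightarrow> 'a \<Rightarrow> 'a) \<Rightarrow> ('a \<Rightarrow> 'a) set" where
  "env_G L m = generate (RBijGroup L) (env_T L m)"

definition env_H :: "'a set \<Rightarrow> ('a \<Rightarrow> 'a \<Rightarrow> 'a) \<Rightarrow> 'a \<Rightarrow> ('a \<Rightarrow> 'a) set" where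
  "env_H L m e = {g \<in> env_G L m. g e = e}"

definition rcc_loop :: "'a set \<Rightarrow> ('a \<Rightarrow> 'a \<Rightarrow> 'a) \<Rightarrow> 'a \<Rightarrow> bool" where
  "rcc_loop L m e \<longleftrightarrow> loop L m e \<and> finite L \<and>
     (\<forall>g\<in>env_G L m. \<forall>t\<in>env_T L m.
        inv\<^bsub>RBijGroup L\<^esub> g \<otimes>\<^bsub>RBijGroup L\<^esub> t \<otimes>\<^bsub>RBijGroup L\<^esub> g \<in> env_T L m)"

text \<open>Loop folder (G,H,T): G finite group, H \<le> G, 1 \<in> T \<subseteq> G, and T is a set of
  representatives of the right cosets of H^g = g\<inverse> H g in G, for every g \<in> G.\<close>
definition loop_folder :: "('g, 'b) monoid_scheme \<Rightarrow> 'g set \<Rightarrow> 'g set \<Rightarrow> bool" where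
  "loop_folder G H T \<longleftrightarrow> group G \<and> finite (carrier G) \<and> subgroup H G \<and>
     \<one>\<^bsub>G\<^esub> \<in> T \<and> T \<subseteq> carrier G \<and>
     (\<forall>g\<in>carrier G. \<forall>x\<in>carrier G.
        \<exists>!t. t \<in> T \<and> t \<in> ((inv\<^bsub>G\<^esub> g) <#\<^bsub>G\<^esub> H #>\<^bsub>G\<^esub> g) #>\<^bsub>G\<^esub> x)"

definition rcc_loop_folder :: "('g, 'b) monoid_scheme \<Rightarrow> 'g set \<Rightarrow> 'g set \<Rightarrow> bool" where
  "rcc_loop_folder G H T \<longleftrightarrow> loop_folder G H T \<and>
     (\<forall>g\<in>carrier G. \<forall>t\<in>T. inv\<^bsub>G\<^esub> g \<otimes>\<^bsub>G\<^esub> t \<otimes>\<^bsub>G\<^esub> g \<in> T)"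

end

(*
  Every x in a subgroup S with H <= S <= G that contains the right translation R_(x e)
  factors uniquely as x = h R_(x e) with h e = e.  For S = K and S = K1 this gives
  |T1| = p, K = H K1 and the loop folder property of (K1, H1, T1); since T is invariant
  under conjugation, so is T1 under K, whence K1 is normal in K.

  Commutativity: as |K1 : H1| = p, a Sylow p-subgroup of K1 is not contained in H1.  It
  acts by conjugation on the p - 1 elements of T1 - {1}, so all its orbits are trivial and it
  centralizes T1, which produces some x in K1 - H1 central in K1.  The normalizer of H1 in
  K1 contains H1 and x, so by primality of the index it is K1.  Hence every h in H1 fixes
  each point t e (t in T1); then h^-1 t h and t are elements of T agreeing at e, so h
  commutes with T1.  The centralizer of T1 in K1 thus contains H1 and x and is all of K1:
  K1 is abelian.  Finally H1 is normal in K because K = H K1 with K1 abelian.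
*)

theory Submission
  imports Defs
begin

section \<open>Subgroups of prime index and p-subgroups\<close>

lemma (in group) card_subgroup_dvd_card:
  assumes "subgroup A G" and "subgroup B G" and "A \<subseteq> B"
  shows "card A dvd card B"
proof -
  interpret B: group "G\<lparr>carrier := B\<rparr>"
    using assms(2) by (rule subgroup_imp_group)
  have "card (rcosets\<^bsub>G\<lparr>carrier := B\<rparr>\<^esub> A) * card A = card B"
    using B.lagrange[OF subgroup_incl[OF assms]] by (simp add: order_def)
  then show ?thesis
    by (metis dvd_triv_right)
qed

lemma (in group) subgroup_between_prime_index:
  assumes "Factorial_Ring.prime p" and "finite B" and "card B = p * card H"
    and "subgroup H G" and "subgroup M G" and "subgroup B G" and "H \<subseteq> M" and "M \<subseteq> B"
  shows "M = H \<or> M = B"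
proof -
  obtain d where d: "card M = card H * d"
    using card_subgroup_dvd_card[OF assms(4,5,7)] by (rule dvdE)
  obtain d' where d': "card B = card M * d'"
    using card_subgroup_dvd_card[OF assms(5,6,8)] by (rule dvdE)
  have "finite H"
    using finite_subset[OF order_trans[OF assms(7,8)] assms(2)] .
  then have "card H > 0"
    using subgroup.one_closed[OF assms(4)] card_gt_0_iff by blast
  moreover have "card H * p = card H * (d * d')"
    using assms(3) d d' by (metis mult.assoc mult.commute)
  ultimately have "p = d * d'"
    by simp
  then consider "d = 1" | "d' = 1"
    using assms(1) prime_product[of d d'] by auto
  then show ?thesis
  proof cases
    case 1
    then show ?thesis
      using d card_subset_eq[OF finite_subset[OF assms(8,2)] assms(7)] by simp
  next
    case 2
    then show ?thesis
      using d' card_subset_eq[OF assms(2,8)] by simp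
  qed
qed

lemma (in group) exists_p_subgroup_not_in_index_p_subgroup:
  assumes "Factorial_Ring.prime p" and "finite B" and "card B = p * card H"
    and "subgroup H G" and "subgroup B G" and "H \<subseteq> B"
  shows "\<exists>P a. subgroup P G \<and> P \<subseteq> B \<and> card P = p ^ a \<and> \<not> P \<subseteq> H"
proof -
  interpret B: group "G\<lparr>carrier := B\<rparr>"
    using assms(5) by (rule subgroup_imp_group)
  define a where "a = multiplicity p (card B)"
  obtain r where "card B = p ^ a * r"
    using multiplicity_dvd[of p "card B"] unfolding a_def by (rule dvdE)
  then obtain P where P: "subgroup P (G\<lparr>carrier := B\<rparr>)" "card P = p ^ a"
    using sylow_thm[OF assms(1) B.is_group] assms(2) by (fastforce simp: order_def)
  have PG: "subgroup P G" and PB: "P \<subseteq> B"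
    using incl_subgroup[OF assms(5) P(1)] subgroup.subset[OF P(1)] by auto
  have "\<not> P \<subseteq> H"
  proof
    assume "P \<subseteq> H"
    then have "p ^ a dvd card H"
      using card_subgroup_dvd_card[OF PG assms(4)] P(2) by simp
    then have "p ^ Suc a dvd card B"
      using assms(3) by simp
    moreover have "card B \<noteq> 0"
      using assms(2) subgroup.one_closed[OF assms(5)] by auto
    moreover have "\<not> is_unit p"
      using assms(1) not_prime_unit by blast
    ultimately have "Suc a \<le> multiplicity p (card B)"
      by (intro multiplicity_geI)
    then show False
      using a_def by simp
  qed
  then show ?thesis
    using PG PB P(2) by blast
qed

lemma (in group) p_subgroup_centralizes_conj_closed_set:
  assumes p: "Factorial_Ring.prime p" and P: "subgroup P G" and "card P = p ^ a"
    and S: "S \<subseteq> carrier G" "\<one> \<in> S" "card S = p"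
    and closed: "\<And>g x. g \<in> P \<Longrightarrow> x \<in> S \<Longrightarrow> g \<otimes> x \<otimes> inv g \<in> S"
    and g: "g \<in> P" and x: "x \<in> S"
  shows "g \<otimes> x = x \<otimes> g"
proof (cases "x = \<one>")
  case True
  then show ?thesis using g subgroup.mem_carrier[OF P] by simp
next
  case False
  have gc: "g \<in> carrier G" and xc: "x \<in> carrier G"
    using g x S(1) subgroup.mem_carrier[OF P] by auto
  interpret conj: group_action "G\<lparr>carrier := P\<rparr>" "carrier G" "\<lambda>g. \<lambda>h\<in>carrier G. g \<otimes> h \<otimes> inv g"
    using group_action.induced_action[OF action_by_conjugation P] .
  define Orb where "Orb = orbit (G\<lparr>carrier := P\<rparr>) (\<lambda>g. \<lambda>h\<in>carrier G. g \<otimes> h \<otimes> inv g) x"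
  have Orb: "Orb = {g \<otimes> x \<otimes> inv g | g. g \<in> P}"
    using xc by (simp add: Orb_def orbit_def)
  have "card Orb * card (stabilizer (G\<lparr>carrier := P\<rparr>) (\<lambda>g. \<lambda>h\<in>carrier G. g \<otimes> h \<otimes> inv g) x) = p ^ a"
    using conj.orbit_stabilizer_theorem[OF xc] assms(3) by (simp add: Orb_def order_def)
  then have "card Orb dvd p ^ a"
    by (rule dvdI[OF sym])
  then obtain i where i: "card Orb = p ^ i"
    using divides_primepow_nat[OF p] by auto
  have "Orb \<subseteq> S - {\<one>}"
  proof
    fix y assume "y \<in> Orb"
    then obtain h where h: "h \<in> P" "y = h \<otimes> x \<otimes> inv h" using Orb by blast
    then have "y \<noteq> \<one>"
      using False xc conjugation_is_inj[of h x \<one>] subgroup.mem_carrier[OF P] by auto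
    then show "y \<in> S - {\<one>}" using h closed x by blast
  qed
  moreover have "finite S"
    using S(3) prime_gt_0_nat[OF p] card_ge_0_finite by blast
  ultimately have "card Orb \<le> p - 1"
    using S(2,3) card_mono[of "S - {\<one>}" Orb] by simp
  then have "p ^ i < p ^ 1"
    using i prime_gt_1_nat[OF p] by simp
  then have "card Orb = 1"
    using i prime_gt_1_nat[OF p] power_strict_increasing_iff[of p i 1] by simp
  then obtain z where "Orb = {z}"
    by (rule card_1_singletonE)
  moreover have "x \<in> Orb"
    using Orb subgroup.one_closed[OF P] xc by force
  moreover have "g \<otimes> x \<otimes> inv g \<in> Orb"
    using Orb g by blast
  ultimately have "g \<otimes> x \<otimes> inv g = x"
    by simp
  then show ?thesis
    using gc xc by (simp add: inv_solve_right')
qed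

section \<open>Centralizers and normalizers\<close>

lemma (in group) inv_mult_cancel_left:
  "x \<in> carrier G \<Longrightarrow> y \<in> carrier G \<Longrightarrow> inv x \<otimes> (x \<otimes> y) = y"
  by (simp flip: m_assoc)

lemma (in group) mult_inv_cancel_left:
  "x \<in> carrier G \<Longrightarrow> y \<in> carrier G \<Longrightarrow> x \<otimes> (inv x \<otimes> y) = y"
  by (simp flip: m_assoc)

lemma (in group) commute_inv:
  assumes "a \<in> carrier G" "s \<in> carrier G" "a \<otimes> s = s \<otimes> a"
  shows "inv a \<otimes> s = s \<otimes> inv a"
proof -
  have "s \<otimes> inv a = inv a \<otimes> (a \<otimes> s) \<otimes> inv a"
    using assms(1,2) by (simp add: m_assoc inv_mult_cancel_left)
  also have "\<dots> = inv a \<otimes> (s \<otimes> a) \<otimes> inv a"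
    using assms(3) by simp
  also have "\<dots> = inv a \<otimes> s"
    using assms(1,2) by (simp add: m_assoc)
  finally show ?thesis ..
qed

lemma (in group) commute_mult:
  assumes "a \<in> carrier G" "b \<in> carrier G" "s \<in> carrier G" "a \<otimes> s = s \<otimes> a" "b \<otimes> s = s \<otimes> b"
  shows "a \<otimes> b \<otimes> s = s \<otimes> (a \<otimes> b)"
  using assms by (metis m_assoc)

definition centralizer :: "('a, 'b) monoid_scheme \<Rightarrow> 'a set \<Rightarrow> 'a set" where
  "centralizer G S = {g \<in> carrier G. \<forall>s\<in>S. g \<otimes>\<^bsub>G\<^esub> s = s \<otimes>\<^bsub>G\<^esub> g}"

lemma (in group) subgroup_centralizer:
  assumes "S \<subseteq> carrier G"
  shows "subgroup (centralizer G S) G"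
proof (rule subgroupI)
  show "centralizer G S \<subseteq> carrier G"
    by (auto simp: centralizer_def)
  show "centralizer G S \<noteq> {}"
    using assms by (force simp: centralizer_def)
  fix a b assume a: "a \<in> centralizer G S" and b: "b \<in> centralizer G S"
  then have ab: "a \<in> carrier G" "b \<in> carrier G"
    by (auto simp: centralizer_def)
  have "inv a \<otimes> s = s \<otimes> inv a" "a \<otimes> b \<otimes> s = s \<otimes> (a \<otimes> b)" if s: "s \<in> S" for s
  proof -
    have "s \<in> carrier G" "a \<otimes> s = s \<otimes> a" "b \<otimes> s = s \<otimes> b"
      using a b s assms by (auto simp: centralizer_def)
    then show "inv a \<otimes> s = s \<otimes> inv a" "a \<otimes> b \<otimes> s = s \<otimes> (a \<otimes> b)"
      using ab commute_inv commute_mult by blast+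
  qed
  then show "inv a \<in> centralizer G S" and "a \<otimes> b \<in> centralizer G S"
    unfolding centralizer_def using ab inv_closed m_closed by blast+
qed

lemma (in group) centralizer_generate:
  assumes "S \<subseteq> carrier G"
  shows "centralizer G (generate G S) = centralizer G S"
proof
  show "centralizer G (generate G S) \<subseteq> centralizer G S"
    using generate.incl[of _ S G] by (auto simp: centralizer_def)
  show "centralizer G S \<subseteq> centralizer G (generate G S)"
  proof
    fix c assume c: "c \<in> centralizer G S"
    then have "S \<subseteq> centralizer G {c}"
      using assms by (auto simp: centralizer_def)
    moreover have "subgroup (centralizer G {c}) G"
      using c by (intro subgroup_centralizer) (simp add: centralizer_def)
    ultimately have "generate G S \<subseteq> centralizer G {c}"
      by (rule generate_subgroup_incl)
    then show "c \<in> centralizer G (generate G S)"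
      using c by (auto simp: centralizer_def)
  qed
qed

lemma (in group) mem_normalizer_iff:
  assumes "H \<subseteq> carrier G"
  shows "g \<in> normalizer G H \<longleftrightarrow> g \<in> carrier G \<and> (\<lambda>h. g \<otimes> h \<otimes> inv g) ` H = H"
proof -
  have "(g <#\<^bsub>G\<^esub> H) #> inv g = (\<lambda>h. g \<otimes> h \<otimes> inv g) ` H"
    by (auto simp: l_coset_def r_coset_def)
  then show ?thesis
    using assms by (auto simp: normalizer_def stabilizer_def)
qed

lemma (in group) normalizer_conj_mem:
  assumes "H \<subseteq> carrier G" and "g \<in> normalizer G H" and "h \<in> H"
  shows "g \<otimes> h \<otimes> inv g \<in> H"
  using assms mem_normalizer_iff by blast

lemma (in group) subgroup_subset_normalizer:
  assumes "subgroup H G"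
  shows "H \<subseteq> normalizer G H"
proof
  fix g assume g: "g \<in> H"
  have gc: "g \<in> carrier G" using g subgroup.mem_carrier[OF assms] by blast
  have "(\<lambda>h. g \<otimes> h \<otimes> inv g) ` H = H"
  proof
    show "(\<lambda>h. g \<otimes> h \<otimes> inv g) ` H \<subseteq> H"
      using g assms by (auto intro: subgroup.m_closed subgroup.m_inv_closed)
    show "H \<subseteq> (\<lambda>h. g \<otimes> h \<otimes> inv g) ` H"
    proof
      fix h assume h: "h \<in> H"
      have "inv g \<otimes> h \<otimes> g \<in> H"
        using g h assms by (auto intro: subgroup.m_closed subgroup.m_inv_closed)
      moreover have "h = g \<otimes> (inv g \<otimes> h \<otimes> g) \<otimes> inv g"
        using gc h subgroup.mem_carrier[OF assms] by (simp add: conjugation_is_surj)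
      ultimately show "h \<in> (\<lambda>h. g \<otimes> h \<otimes> inv g) ` H" by blast
    qed
  qed
  then show "g \<in> normalizer G H"
    using gc subgroup.subset[OF assms] mem_normalizer_iff by blast
qed

lemma (in group) centralizer_subset_normalizer:
  assumes "H \<subseteq> carrier G"
  shows "centralizer G H \<subseteq> normalizer G H"
proof
  fix g assume g: "g \<in> centralizer G H"
  then have "g \<otimes> h \<otimes> inv g = h" if "h \<in> H" for h
    using that assms by (auto simp: centralizer_def m_assoc subset_iff)
  then have "(\<lambda>h. g \<otimes> h \<otimes> inv g) ` H = H"
    by simp
  then show "g \<in> normalizer G H"
    using g assms mem_normalizer_iff by (simp add: centralizer_def)
qed

lemma (in group) normal_in_subgroupI:
  assumes "subgroup K G" and "subgroup N G" and "N \<subseteq> K"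
    and "\<And>x h. x \<in> K \<Longrightarrow> h \<in> N \<Longrightarrow> x \<otimes> h \<otimes> inv x \<in> N"
  shows "N \<lhd> G\<lparr>carrier := K\<rparr>"
proof -
  interpret K: group "G\<lparr>carrier := K\<rparr>"
    using assms(1) by (rule subgroup_imp_group)
  show ?thesis
  proof (rule K.normal_invI)
    show "subgroup N (G\<lparr>carrier := K\<rparr>)"
      using subgroup_incl[OF assms(2,1,3)] .
    fix x h assume "x \<in> carrier (G\<lparr>carrier := K\<rparr>)" and "h \<in> N"
    then show "x \<otimes>\<^bsub>G\<lparr>carrier := K\<rparr>\<^esub> h \<otimes>\<^bsub>G\<lparr>carrier := K\<rparr>\<^esub> inv\<^bsub>G\<lparr>carrier := K\<rparr>\<^esub> x \<in> N"
      using assms(4) m_inv_consistent[OF assms(1)] by simp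
  qed
qed

section \<open>The envelope of an RCC loop\<close>

lemma group_RBijGroup: "group (RBijGroup S)"
proof -
  have "\<exists>y\<in>Bij S. compose S x y = (\<lambda>x\<in>S. x)" if "x \<in> Bij S" for x
  proof
    show "compose S x (restrict (inv_into S x) S) = (\<lambda>x\<in>S. x)"
      using that by (simp add: Bij_def compose_id_inv_into bij_betw_def)
    show "restrict (inv_into S x) S \<in> Bij S"
      using that by (rule restrict_inv_into_Bij)
  qed
  then show ?thesis
    unfolding RBijGroup_def
    by (intro groupI) (auto simp: compose_Bij id_Bij Bij_imp_funcset Bij_imp_extensional
        compose_assoc compose_Id[OF Bij_imp_funcset Bij_imp_extensional])
qed

lemma loopD:
  assumes "loop L m e"
  shows "e \<in> L" and "\<And>x y. x \<in> L \<Longrightarrow> y \<in> L \<Longrightarrow> m x y \<in> L"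
    and "\<And>x. x \<in> L \<Longrightarrow> m e x = x" and "\<And>x. x \<in> L \<Longrightarrow> m x e = x"
    and "\<And>a b. a \<in> L \<Longrightarrow> b \<in> L \<Longrightarrow> \<exists>!x. x \<in> L \<and> m a x = b"
    and "\<And>a b. a \<in> L \<Longrightarrow> b \<in> L \<Longrightarrow> \<exists>!y. y \<in> L \<and> m y a = b"
  using assms unfolding loop_def by auto

locale rcc_envelope = group GG for GG :: "('a \<Rightarrow> 'a) monoid" (structure) +
  fixes L :: "'a set" and m :: "'a \<Rightarrow> 'a \<Rightarrow> 'a" and e :: 'a
  assumes GG_eq: "GG = RBijGroup L"
    and rcc: "rcc_loop L m e"
begin

abbreviation "T \<equiv> env_T L m"
abbreviation "G \<equiv> env_G L m"
abbreviation "H \<equiv> env_H L m e"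

lemmas loop_laws = loopD[OF conjunct1[OF rcc[unfolded rcc_loop_def]]]

lemma finite_L: "finite L"
  using rcc by (simp add: rcc_loop_def)

lemma carrier_eq: "carrier GG = Bij L"
  by (simp add: GG_eq RBijGroup_def)

lemma mult_apply: "u \<in> L \<Longrightarrow> (f \<otimes> g) u = g (f u)"
  by (simp add: GG_eq RBijGroup_def compose_def)

lemma one_apply: "u \<in> L \<Longrightarrow> \<one> u = u"
  by (simp add: GG_eq RBijGroup_def)

lemma apply_in_L: "f \<in> carrier GG \<Longrightarrow> u \<in> L \<Longrightarrow> f u \<in> L"
  using carrier_eq Bij_imp_funcset funcset_mem by metis

lemma inv_apply_apply: "f \<in> carrier GG \<Longrightarrow> u \<in> L \<Longrightarrow> (inv f) (f u) = u"
  using mult_apply[of u f "inv f"] one_apply[of u] by simp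

lemma apply_inv_apply: "f \<in> carrier GG \<Longrightarrow> u \<in> L \<Longrightarrow> f ((inv f) u) = u"
  using mult_apply[of u "inv f" f] one_apply[of u] by simp

lemma carrier_eqI:
  assumes "f \<in> carrier GG" "g \<in> carrier GG" "\<And>u. u \<in> L \<Longrightarrow> f u = g u"
  shows "f = g"
  by (rule extensionalityI[of f L g]) (use assms carrier_eq Bij_imp_extensional in auto)

lemma finite_carrier: "finite (carrier GG)"
proof -
  have "carrier GG \<subseteq> PiE L (\<lambda>_. L)"
    using carrier_eq Bij_imp_funcset Bij_imp_extensional by (auto simp: PiE_def)
  moreover have "finite (PiE L (\<lambda>_. L))"
    using finite_L by (simp add: finite_PiE)
  ultimately show ?thesis
    by (rule finite_subset)
qed

lemma rtrans_apply: "u \<in> L \<Longrightarrow> rtrans L m a u = m u a"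
  by (simp add: rtrans_def)

lemma rtrans_apply_e: "a \<in> L \<Longrightarrow> rtrans L m a e = a"
  using loop_laws(1,3) by (simp add: rtrans_def)

lemma rtrans_in_carrier: "a \<in> L \<Longrightarrow> rtrans L m a \<in> carrier GG"
proof -
  assume a: "a \<in> L"
  have "bij_betw (\<lambda>x. m x a) L L"
  proof (rule bij_betw_imageI)
    show "inj_on (\<lambda>x. m x a) L"
      using loop_laws(6)[OF a] loop_laws(2)[OF _ a] unfolding inj_on_def by metis
    show "(\<lambda>x. m x a) ` L = L"
      using loop_laws(2)[OF _ a] loop_laws(6)[OF a] unfolding image_def by blast
  qed
  then show ?thesis
    unfolding carrier_eq Bij_def rtrans_def by (simp add: bij_betw_def inj_on_def)
qed

lemma rtrans_in_T: "a \<in> L \<Longrightarrow> rtrans L m a \<in> T"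
  by (simp add: env_T_def)

lemma T_subset_carrier: "T \<subseteq> carrier GG"
  unfolding env_T_def using rtrans_in_carrier by blast

lemma subgroup_G: "subgroup G GG"
  unfolding env_G_def GG_eq[symmetric] using generate_is_subgroup T_subset_carrier by simp

lemma T_subset_G: "T \<subseteq> G"
  unfolding env_G_def GG_eq[symmetric] using generate.incl[of _ T GG] by blast

lemma G_subset_carrier: "G \<subseteq> carrier GG"
  using subgroup_G subgroup.subset by blast

lemma one_in_T: "\<one> \<in> T"
proof -
  have "\<one> = rtrans L m e"
    by (rule carrier_eqI) (simp_all add: rtrans_in_carrier loop_laws(1,4) one_apply rtrans_apply)
  then show ?thesis
    using loop_laws(1) rtrans_in_T by simp
qed

lemma T_eq_if_apply_eq:
  assumes "t \<in> T" "t' \<in> T" "u \<in> L" "t u = t' u"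
  shows "t = t'"
proof -
  obtain a b where ab: "a \<in> L" "t = rtrans L m a" "b \<in> L" "t' = rtrans L m b"
    using assms(1,2) unfolding env_T_def by blast
  then have "m u a = m u b"
    using assms(3,4) by (simp add: rtrans_apply)
  then have "a = b"
    using loop_laws(5)[OF assms(3) loop_laws(2)[OF assms(3) ab(1)]] ab(1,3) by auto
  then show ?thesis
    using ab by simp
qed

lemma T_transitive:
  assumes "u \<in> L" "v \<in> L"
  shows "\<exists>t\<in>T. t u = v"
proof -
  obtain a where "a \<in> L" "m u a = v"
    using loop_laws(5)[OF assms] by auto
  then show ?thesis
    using rtrans_apply[OF assms(1)] rtrans_in_T by blast
qed

lemma conj_T_closed: "g \<in> G \<Longrightarrow> t \<in> T \<Longrightarrow> inv g \<otimes> t \<otimes> g \<in> T"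
  using rcc unfolding rcc_loop_def GG_eq by blast

lemma conj_T_closed': "g \<in> G \<Longrightarrow> t \<in> T \<Longrightarrow> g \<otimes> t \<otimes> inv g \<in> T"
  using conj_T_closed[of "inv g" t] subgroup_G
  by (simp add: subgroup.m_inv_closed subgroup.mem_carrier)

lemma H_eq: "H = {g \<in> G. g e = e}"
  by (simp add: env_H_def)

lemma subgroup_H: "subgroup H GG"
proof (rule subgroupI)
  show "H \<subseteq> carrier GG"
    using G_subset_carrier H_eq by auto
  show "H \<noteq> {}"
    using H_eq subgroup.one_closed[OF subgroup_G] one_apply loop_laws(1) by auto
  fix a b assume a: "a \<in> H" and b: "b \<in> H"
  then have aG: "a \<in> G" and ae: "a e = e" and ac: "a \<in> carrier GG"
    using H_eq G_subset_carrier by auto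
  show "inv a \<in> H"
    using inv_apply_apply[OF ac loop_laws(1)] ae H_eq subgroup.m_inv_closed[OF subgroup_G aG] by simp
  show "a \<otimes> b \<in> H"
    using mult_apply[OF loop_laws(1)] ae b H_eq subgroup.m_closed[OF subgroup_G aG] by simp
qed

lemma conj_apply_e_eq:
  assumes "g \<in> carrier GG" "h \<in> carrier GG"
  shows "(g \<otimes> h \<otimes> inv g) e = e \<longleftrightarrow> h (g e) = g e"
proof -
  have hge: "h (g e) \<in> L"
    using assms apply_in_L loop_laws(1) by blast
  have eq: "(g \<otimes> h \<otimes> inv g) e = (inv g) (h (g e))"
    using loop_laws(1) by (simp add: mult_apply)
  show ?thesis
  proof
    assume "(g \<otimes> h \<otimes> inv g) e = e"
    then have "g ((inv g) (h (g e))) = g e"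
      using eq by simp
    then show "h (g e) = g e"
      using apply_inv_apply[OF assms(1) hge] by simp
  next
    assume "h (g e) = g e"
    then show "(g \<otimes> h \<otimes> inv g) e = e"
      using eq inv_apply_apply[OF assms(1) loop_laws(1)] by simp
  qed
qed

lemma mult_inv_rtrans_apply_e:
  assumes "x \<in> carrier GG"
  shows "(x \<otimes> inv (rtrans L m (x e))) e = e"
proof -
  have xe: "x e \<in> L"
    using apply_in_L[OF assms loop_laws(1)] .
  have "(x \<otimes> inv (rtrans L m (x e))) e = (inv (rtrans L m (x e))) (rtrans L m (x e) e)"
    using loop_laws(1) by (simp add: mult_apply rtrans_apply_e[OF xe])
  also have "\<dots> = e"
    using inv_apply_apply[OF rtrans_in_carrier[OF xe] loop_laws(1)] .
  finally show ?thesis .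
qed

text \<open>Each \<open>x \<in> S\<close> factors uniquely as \<open>x = h t\<close> with \<open>h e = e\<close> and \<open>t \<in> T\<close>, namely \<open>t = R\<^bsub>x e\<^esub>\<close>.\<close>

lemma card_eq_card_T_times_card_stabilizer:
  assumes S: "subgroup S GG" "S \<subseteq> G"
    and rtrans_closed: "\<And>x. x \<in> S \<Longrightarrow> rtrans L m (x e) \<in> S"
  shows "card S = card (T \<inter> S) * card {h \<in> S. h e = e}"
proof -
  have Sc: "S \<subseteq> carrier GG"
    using S subgroup.subset by blast
  let ?A = "{h \<in> S. h e = e} \<times> (T \<inter> S)"
  have "bij_betw (\<lambda>(h, t). h \<otimes> t) ?A S"
  proof (rule bij_betwI')
    fix a b assume "a \<in> ?A" and "b \<in> ?A"
    then obtain h t h' t' where ht: "a = (h, t)" "b = (h', t')" "h \<in> S" "h e = e" "t \<in> T" "t \<in> S"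
      "h' \<in> S" "h' e = e" "t' \<in> T" "t' \<in> S"
      by auto
    show "((\<lambda>(h, t). h \<otimes> t) a = (\<lambda>(h, t). h \<otimes> t) b) = (a = b)"
    proof
      assume "(\<lambda>(h, t). h \<otimes> t) a = (\<lambda>(h, t). h \<otimes> t) b"
      then have eq: "h \<otimes> t = h' \<otimes> t'"
        using ht by simp
      then have "(h \<otimes> t) e = (h' \<otimes> t') e"
        by simp
      then have "t (h e) = t' (h' e)"
        by (simp add: mult_apply loop_laws(1))
      then have tt: "t = t'"
        using T_eq_if_apply_eq ht loop_laws(1) by simp
      moreover have "h \<in> carrier GG" "h' \<in> carrier GG" "t' \<in> carrier GG"
        using ht Sc by auto
      ultimately have "h = h'"
        using eq r_cancel[of t' h h'] by simp
      then show "a = b"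
        using ht tt by simp
    qed simp
  next
    fix a assume "a \<in> ?A"
    then show "(\<lambda>(h, t). h \<otimes> t) a \<in> S"
      using subgroup.m_closed[OF S(1)] by auto
  next
    fix x assume x: "x \<in> S"
    have xc: "x \<in> carrier GG"
      using x Sc by blast
    define t where "t = rtrans L m (x e)"
    have t: "t \<in> T" "t \<in> S" "t \<in> carrier GG"
      using rtrans_in_T[OF apply_in_L[OF xc loop_laws(1)]] rtrans_closed[OF x] Sc t_def by auto
    have "x \<otimes> inv t \<in> S"
      using x t subgroup.m_closed[OF S(1)] subgroup.m_inv_closed[OF S(1)] by blast
    moreover have "(x \<otimes> inv t) e = e"
      using mult_inv_rtrans_apply_e[OF xc] t_def by simp
    moreover have "x = (x \<otimes> inv t) \<otimes> t"
      using xc t by (simp add: m_assoc)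
    ultimately show "\<exists>a\<in>?A. x = (\<lambda>(h, t). h \<otimes> t) a"
      using t by auto
  qed
  then have "card S = card ?A"
    by (simp add: bij_betw_same_card)
  then show ?thesis
    by (simp add: card_cartesian_product)
qed

lemma conj_in_H_if_apply_eq:
  assumes "g \<in> G" "t \<in> G" "x \<in> G" "t (g e) = x (g e)"
  shows "g \<otimes> t \<otimes> inv x \<otimes> inv g \<in> H"
proof -
  have c: "g \<in> carrier GG" "t \<in> carrier GG" "x \<in> carrier GG"
    using assms G_subset_carrier by auto
  have "(g \<otimes> t \<otimes> inv x \<otimes> inv g) e = (inv g) ((inv x) (t (g e)))"
    using loop_laws(1) by (simp add: mult_apply)
  also have "\<dots> = e"
    using assms(4) c inv_apply_apply apply_in_L loop_laws(1) by simp
  finally show ?thesis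
    using assms subgroup_G H_eq by (simp add: subgroup.m_closed subgroup.m_inv_closed)
qed

lemma commute_with_T_if_fixes:
  assumes "t \<in> T" "h \<in> G" "h e = e" "h (t e) = t e"
  shows "h \<otimes> t = t \<otimes> h"
proof -
  have c: "h \<in> carrier GG" "t \<in> carrier GG"
    using assms G_subset_carrier T_subset_carrier by auto
  have "(inv h) e = e"
    using inv_apply_apply[OF c(1) loop_laws(1)] assms(3) by simp
  then have "(inv h \<otimes> t \<otimes> h) e = t e"
    using assms(4) loop_laws(1) by (simp add: mult_apply)
  then have "inv h \<otimes> t \<otimes> h = t"
    using T_eq_if_apply_eq conj_T_closed[OF assms(2,1)] assms(1) loop_laws(1) by blast
  then have "h \<otimes> (inv h \<otimes> t \<otimes> h) = h \<otimes> t"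
    by simp
  then show ?thesis
    using c by (simp flip: m_assoc)
qed

end

section \<open>Subgroups between the stabilizer and the envelope\<close>

locale rcc_envelope_over = rcc_envelope +
  fixes K :: "('a \<Rightarrow> 'a) set"
  assumes subgroup_K: "subgroup K GG" and H_subset_K: "H \<subseteq> K" and K_subset_G: "K \<subseteq> G"
begin

abbreviation "T1 \<equiv> T \<inter> K"
abbreviation "K1 \<equiv> generate GG T1"
abbreviation "H1 \<equiv> H \<inter> K1"

lemma K_subset_carrier: "K \<subseteq> carrier GG"
  using subgroup_K subgroup.subset by blast

lemma T_mem_K_if_apply_eq:
  assumes "t \<in> T" "g \<in> K" "x \<in> K" "t (g e) = x (g e)"
  shows "t \<in> K"
proof -
  have c: "g \<in> carrier GG" "x \<in> carrier GG" "t \<in> carrier GG"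
    using assms K_subset_carrier T_subset_carrier by auto
  define h where "h = g \<otimes> t \<otimes> inv x \<otimes> inv g"
  have "h \<in> K"
    using conj_in_H_if_apply_eq assms K_subset_G T_subset_G H_subset_K h_def by blast
  moreover have "t = inv g \<otimes> h \<otimes> g \<otimes> x"
    using c by (simp add: h_def m_assoc inv_mult_cancel_left)
  ultimately show ?thesis
    using assms(2,3) subgroup_K by (simp add: subgroup.m_closed subgroup.m_inv_closed)
qed

lemma rtrans_apply_e_mem_K: "x \<in> K \<Longrightarrow> rtrans L m (x e) \<in> K"
  using T_mem_K_if_apply_eq[of _ \<one> x] rtrans_in_T apply_in_L K_subset_carrier
    subgroup.one_closed[OF subgroup_K] one_apply rtrans_apply_e loop_laws(1) by (simp add: subset_iff)

lemma T1_subset_carrier: "T1 \<subseteq> carrier GG"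
  using T_subset_carrier by blast

lemma subgroup_K1: "subgroup K1 GG"
  using generate_is_subgroup[OF T1_subset_carrier] .

lemma centralizer_K1: "centralizer GG K1 = centralizer GG T1"
  using centralizer_generate[OF T1_subset_carrier] .

lemma T1_subset_K1: "T1 \<subseteq> K1"
  using generate.incl[of _ T1 GG] by blast

lemma K1_subset_K: "K1 \<subseteq> K"
  using generate_subgroup_incl[OF _ subgroup_K] by blast

lemma K1_subset_carrier: "K1 \<subseteq> carrier GG"
  using K1_subset_K K_subset_carrier by blast

lemma subgroup_H1: "subgroup H1 GG"
  using subgroups_Inter_pair[OF subgroup_H subgroup_K1] .

lemma card_K: "card K = card T1 * card H"
proof -
  have "{h \<in> K. h e = e} = H"
    using H_subset_K K_subset_G H_eq by blast
  then show ?thesis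
    using card_eq_card_T_times_card_stabilizer[OF subgroup_K K_subset_G]
      rtrans_apply_e_mem_K by simp
qed

lemma card_K1: "card K1 = card T1 * card H1"
proof -
  have "T \<inter> K1 = T1" and "{h \<in> K1. h e = e} = H1"
    using T1_subset_K1 K1_subset_K K_subset_G H_eq by blast+
  moreover have "rtrans L m (x e) \<in> K1" if "x \<in> K1" for x
    using that rtrans_apply_e_mem_K rtrans_in_T apply_in_L loop_laws(1) K1_subset_K
      K1_subset_carrier T1_subset_K1 by blast
  ultimately show ?thesis
    using card_eq_card_T_times_card_stabilizer[OF subgroup_K1] K1_subset_K K_subset_G
    by auto
qed

lemma conj_T1_closed: "g \<in> K \<Longrightarrow> t \<in> T1 \<Longrightarrow> g \<otimes> t \<otimes> inv g \<in> T1"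
  using conj_T_closed' K_subset_G subgroup_K T_subset_G
  by (meson IntD1 IntD2 IntI subgroup.m_closed subgroup.m_inv_closed subsetD)

lemma mem_conj_coset_iff:
  assumes g: "g \<in> K1" and x: "x \<in> K1" and t: "t \<in> T1"
  shows "t \<in> ((inv g <#\<^bsub>GG\<^esub> H1) #> g) #> x \<longleftrightarrow> t (g e) = x (g e)"
proof -
  have c: "g \<in> carrier GG" "x \<in> carrier GG" "t \<in> carrier GG"
    using g x t K1_subset_carrier T_subset_carrier by auto
  have mem: "t \<in> ((inv g <#\<^bsub>GG\<^esub> H1) #> g) #> x \<longleftrightarrow> (\<exists>h\<in>H1. t = inv g \<otimes> h \<otimes> g \<otimes> x)"
    unfolding r_coset_def l_coset_def by blast
  show ?thesis
  proof
    assume "t \<in> ((inv g <#\<^bsub>GG\<^esub> H1) #> g) #> x"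
    then obtain h where h: "h \<in> H1" "t = inv g \<otimes> h \<otimes> g \<otimes> x"
      using mem by blast
    then have "h e = e"
      using H_eq by auto
    then show "t (g e) = x (g e)"
      using h(2) c inv_apply_apply apply_in_L loop_laws(1) by (simp add: mult_apply)
  next
    assume "t (g e) = x (g e)"
    then have "g \<otimes> t \<otimes> inv x \<otimes> inv g \<in> H"
      using conj_in_H_if_apply_eq g x t K1_subset_K K_subset_G T_subset_G by blast
    moreover have "g \<otimes> t \<otimes> inv x \<otimes> inv g \<in> K1"
      using g x t T1_subset_K1 subgroup_K1 by (meson subgroup.m_closed subgroup.m_inv_closed subsetD)
    moreover have "t = inv g \<otimes> (g \<otimes> t \<otimes> inv x \<otimes> inv g) \<otimes> g \<otimes> x"
      using c by (simp add: m_assoc inv_mult_cancel_left)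
    ultimately show "t \<in> ((inv g <#\<^bsub>GG\<^esub> H1) #> g) #> x"
      using mem by blast
  qed
qed

lemma ex1_T1_in_conj_coset:
  assumes g: "g \<in> K1" and x: "x \<in> K1"
  shows "\<exists>!t. t \<in> T1 \<and> t \<in> ((inv g <#\<^bsub>GG\<^esub> H1) #> g) #> x"
proof -
  have ge: "g e \<in> L" and xge: "x (g e) \<in> L"
    using g x K1_subset_carrier apply_in_L loop_laws(1) by blast+
  obtain t where t: "t \<in> T" "t (g e) = x (g e)"
    using T_transitive[OF ge xge] by blast
  then have t1: "t \<in> T1"
    using T_mem_K_if_apply_eq g x K1_subset_K by blast
  show ?thesis
  proof (rule ex1I)
    show "t \<in> T1 \<and> t \<in> ((inv g <#\<^bsub>GG\<^esub> H1) #> g) #> x"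
      using t1 t(2) mem_conj_coset_iff[OF g x t1] by simp
    fix t' assume "t' \<in> T1 \<and> t' \<in> ((inv g <#\<^bsub>GG\<^esub> H1) #> g) #> x"
    then show "t' = t"
      using mem_conj_coset_iff[OF g x] t T_eq_if_apply_eq[OF _ _ ge] by auto
  qed
qed

lemma rcc_loop_folder_K1: "rcc_loop_folder (GG\<lparr>carrier := K1\<rparr>) H1 T1"
proof -
  let ?K1 = "GG\<lparr>carrier := K1\<rparr>"
  have inv_K1: "inv\<^bsub>?K1\<^esub> g = inv g" if "g \<in> K1" for g
    using m_inv_consistent[OF subgroup_K1 that] .
  have cosets: "(inv\<^bsub>?K1\<^esub> g <#\<^bsub>?K1\<^esub> H1 #>\<^bsub>?K1\<^esub> g) #>\<^bsub>?K1\<^esub> x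
      = ((inv g <#\<^bsub>GG\<^esub> H1) #> g) #> x" if "g \<in> K1" for g x
    using inv_K1[OF that] by (simp add: r_coset_def l_coset_def)
  have "loop_folder ?K1 H1 T1"
    unfolding loop_folder_def
  proof (intro conjI ballI)
    show "group ?K1"
      using subgroup_K1 by (rule subgroup_imp_group)
    show "finite (carrier ?K1)"
      using finite_carrier K1_subset_carrier finite_subset by simp
    show "subgroup H1 ?K1"
      using subgroup_incl[OF subgroup_H1 subgroup_K1] by blast
    show "\<one>\<^bsub>?K1\<^esub> \<in> T1"
      using one_in_T subgroup.one_closed[OF subgroup_K] by simp
    show "T1 \<subseteq> carrier ?K1"
      using T1_subset_K1 by simp
    fix g x assume "g \<in> carrier ?K1" and "x \<in> carrier ?K1"
    then show "\<exists>!t. t \<in> T1 \<and> t \<in> (inv\<^bsub>?K1\<^esub> g <#\<^bsub>?K1\<^esub> H1 #>\<^bsub>?K1\<^esub> g) #>\<^bsub>?K1\<^esub> x"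
      using ex1_T1_in_conj_coset cosets by simp
  qed
  moreover have "inv\<^bsub>?K1\<^esub> g \<otimes>\<^bsub>?K1\<^esub> t \<otimes>\<^bsub>?K1\<^esub> g \<in> T1" if "g \<in> K1" "t \<in> T1" for g t
  proof -
    have "g \<in> carrier GG" "inv g \<in> K"
      using that K1_subset_K K1_subset_carrier subgroup_K by (auto simp: subgroup.m_inv_closed)
    then show ?thesis
      using that inv_K1 conj_T1_closed[of "inv g" t] by simp
  qed
  ultimately show ?thesis
    unfolding rcc_loop_folder_def by simp
qed

lemma K1_normal_K: "K1 \<lhd> GG\<lparr>carrier := K\<rparr>"
proof -
  interpret K: group "GG\<lparr>carrier := K\<rparr>"
    using subgroup_K by (rule subgroup_imp_group)
  have "generate (GG\<lparr>carrier := K\<rparr>) T1 \<lhd> GG\<lparr>carrier := K\<rparr>"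
    using conj_T1_closed m_inv_consistent[OF subgroup_K] by (intro K.normal_generateI) auto
  then show ?thesis
    using generate_consistent[OF _ subgroup_K] by simp
qed

lemma K_eq_H_K1: "K = H <#> K1"
proof
  show "H <#> K1 \<subseteq> K"
    unfolding set_mult_def using H_subset_K K1_subset_K subgroup.m_closed[OF subgroup_K] by blast
  show "K \<subseteq> H <#> K1"
  proof
    fix x assume x: "x \<in> K"
    have xc: "x \<in> carrier GG"
      using x K_subset_carrier by blast
    define t where "t = rtrans L m (x e)"
    have t: "t \<in> T1" "t \<in> carrier GG"
      using rtrans_apply_e_mem_K[OF x] rtrans_in_T[OF apply_in_L[OF xc loop_laws(1)]] T_subset_carrier
      by (auto simp: t_def)
    have "x \<otimes> inv t \<in> G"
      using x t K_subset_G T_subset_G subgroup_G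
      by (meson IntD1 subgroup.m_closed subgroup.m_inv_closed subsetD)
    then have "x \<otimes> inv t \<in> H"
      using mult_inv_rtrans_apply_e[OF xc] H_eq t_def by simp
    moreover have "x = (x \<otimes> inv t) \<otimes> t"
      using xc t by (simp add: m_assoc)
    ultimately show "x \<in> H <#> K1"
      unfolding set_mult_def using t T1_subset_K1 by blast
  qed
qed

end

section \<open>Index p over the stabilizer\<close>

locale rcc_envelope_prime_index = rcc_envelope_over +
  fixes p :: nat
  assumes prime_p: "Factorial_Ring.prime p" and card_K_eq: "card K = p * card H"
begin

lemma card_T1: "card T1 = p"
proof -
  have "finite H"
    using finite_carrier subgroup.subset[OF subgroup_H] by (rule finite_subset[rotated])
  then have "card H > 0"
    using subgroup.one_closed[OF subgroup_H] card_gt_0_iff by blast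
  then show ?thesis
    using card_K card_K_eq by simp
qed

lemma card_K1_eq: "card K1 = p * card H1"
  using card_K1 card_T1 by simp

lemma exists_centralizing_T1_outside_H1: "\<exists>x\<in>K1. x \<notin> H1 \<and> x \<in> centralizer GG T1"
proof -
  obtain P a where P: "subgroup P GG" "P \<subseteq> K1" "card P = p ^ a" "\<not> P \<subseteq> H1"
    using exists_p_subgroup_not_in_index_p_subgroup[OF prime_p _ card_K1_eq subgroup_H1 subgroup_K1]
      finite_subset[OF K1_subset_carrier finite_carrier] by blast
  then obtain x where x: "x \<in> P" "x \<notin> H1"
    by blast
  have "x \<otimes> t = t \<otimes> x" if "t \<in> T1" for t
    using p_subgroup_centralizes_conj_closed_set[OF prime_p P(1,3) _ _ card_T1 _ x(1) that]
      T_subset_carrier one_in_T subgroup.one_closed[OF subgroup_K] conj_T1_closed P(2) K1_subset_K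
    by blast
  then show ?thesis
    using x P(2) subgroup.mem_carrier[OF P(1) x(1)] by (auto simp: centralizer_def)
qed

lemma K1_subset_normalizer_H1: "K1 \<subseteq> normalizer GG H1"
proof -
  obtain x where x: "x \<in> K1" "x \<notin> H1" "x \<in> centralizer GG T1"
    using exists_centralizing_T1_outside_H1 by blast
  have "x \<in> centralizer GG K1"
    using x(3) centralizer_K1 by simp
  then have "x \<in> centralizer GG H1"
    by (auto simp: centralizer_def)
  then have "x \<in> normalizer GG H1"
    using centralizer_subset_normalizer subgroup.subset[OF subgroup_H1] by blast
  moreover have "subgroup (K1 \<inter> normalizer GG H1) GG"
    using subgroups_Inter_pair[OF subgroup_K1 normalizer_imp_subgroup] subgroup.subset[OF subgroup_H1]
    by blast
  moreover have "H1 \<subseteq> K1 \<inter> normalizer GG H1"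
    using subgroup_subset_normalizer[OF subgroup_H1] by blast
  ultimately have "K1 \<inter> normalizer GG H1 = K1"
    using subgroup_between_prime_index[OF prime_p _ card_K1_eq subgroup_H1 _ subgroup_K1]
      finite_subset[OF K1_subset_carrier finite_carrier] x(1,2) by blast
  then show ?thesis
    by blast
qed

text \<open>Normality of \<open>H\<^sub>1\<close> in \<open>K\<^sub>1\<close> says that \<open>H\<^sub>1\<close> fixes the whole orbit \<open>T\<^sub>1 e\<close>.\<close>

lemma H1_subset_centralizer_T1: "H1 \<subseteq> centralizer GG T1"
proof
  fix h assume h: "h \<in> H1"
  have hc: "h \<in> carrier GG" and he: "h e = e" and hG: "h \<in> G"
    using h H_eq G_subset_carrier by auto
  have "h \<otimes> t = t \<otimes> h" if t: "t \<in> T1" for t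
  proof -
    have tc: "t \<in> carrier GG"
      using t T_subset_carrier by blast
    have "t \<otimes> h \<otimes> inv t \<in> H1"
      using normalizer_conj_mem K1_subset_normalizer_H1 subgroup.subset[OF subgroup_H1]
        t T1_subset_K1 h by blast
    then have "h (t e) = t e"
      using conj_apply_e_eq[OF tc hc] H_eq by auto
    then show ?thesis
      using commute_with_T_if_fixes t hG he by blast
  qed
  then show "h \<in> centralizer GG T1"
    using hc by (simp add: centralizer_def)
qed

lemma K1_subset_centralizer_K1: "K1 \<subseteq> centralizer GG K1"
proof -
  obtain x where x: "x \<in> K1" "x \<notin> H1" "x \<in> centralizer GG T1"
    using exists_centralizing_T1_outside_H1 by blast
  have "subgroup (K1 \<inter> centralizer GG T1) GG"
    using subgroups_Inter_pair[OF subgroup_K1 subgroup_centralizer[OF T1_subset_carrier]] .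
  moreover have "H1 \<subseteq> K1 \<inter> centralizer GG T1"
    using H1_subset_centralizer_T1 by blast
  ultimately have "K1 \<inter> centralizer GG T1 = K1"
    using subgroup_between_prime_index[OF prime_p _ card_K1_eq subgroup_H1 _ subgroup_K1]
      finite_subset[OF K1_subset_carrier finite_carrier] x by blast
  then show ?thesis
    using centralizer_K1 by auto
qed

lemma comm_group_K1: "comm_group (GG\<lparr>carrier := K1\<rparr>)"
proof (rule group.group_comm_groupI)
  show "group (GG\<lparr>carrier := K1\<rparr>)"
    using subgroup_K1 by (rule subgroup_imp_group)
  fix x y assume "x \<in> carrier (GG\<lparr>carrier := K1\<rparr>)" and "y \<in> carrier (GG\<lparr>carrier := K1\<rparr>)"
  then show "x \<otimes>\<^bsub>GG\<lparr>carrier := K1\<rparr>\<^esub> y = y \<otimes>\<^bsub>GG\<lparr>carrier := K1\<rparr>\<^esub> x"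
    using K1_subset_centralizer_K1 by (auto simp: centralizer_def)
qed

lemma H1_normal_K: "H1 \<lhd> GG\<lparr>carrier := K\<rparr>"
proof (rule normal_in_subgroupI[OF subgroup_K subgroup_H1])
  show "H1 \<subseteq> K"
    using K1_subset_K by blast
  fix x h assume x: "x \<in> K" and h: "h \<in> H1"
  obtain h0 y where hy: "h0 \<in> H" "y \<in> K1" "x = h0 \<otimes> y"
    using x K_eq_H_K1 unfolding set_mult_def by blast
  have c: "h0 \<in> carrier GG" "y \<in> carrier GG" "h \<in> carrier GG"
    using hy h K1_subset_carrier subgroup.subset[OF subgroup_H] by auto
  have "y \<otimes> h = h \<otimes> y"
    using K1_subset_centralizer_K1 hy(2) h by (auto simp: centralizer_def)
  then have "x \<otimes> h \<otimes> inv x = h0 \<otimes> h \<otimes> inv h0"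
    using hy(3) c by (simp add: m_assoc inv_mult_group mult_inv_cancel_left)
  moreover have "h0 \<otimes> h \<otimes> inv h0 \<in> H"
    using hy(1) h subgroup_H by (meson IntD1 subgroup.m_closed subgroup.m_inv_closed)
  moreover have "x \<otimes> h \<otimes> inv x \<in> K1"
  proof -
    interpret K: group "GG\<lparr>carrier := K\<rparr>"
      using subgroup_K by (rule subgroup_imp_group)
    show ?thesis
      using K1_normal_K K.normal_inv_iff x h m_inv_consistent[OF subgroup_K x] by auto
  qed
  ultimately show "x \<otimes> h \<otimes> inv x \<in> H1"
    by simp
qed

end

theorem lemma5p1:
  fixes L :: "'a set" and m :: "'a \<Rightarrow> 'a \<Rightarrow> 'a" and e :: 'a
    and p q :: nat and K :: "('a \<Rightarrow> 'a) set"
  defines "\<G> \<equiv> RBijGroup L"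
  defines "G \<equiv> env_G L m" and "H \<equiv> env_H L m e" and "T \<equiv> env_T L m"
  defines "T1 \<equiv> T \<inter> K"
  defines "K1 \<equiv> generate \<G> T1"
  defines "H1 \<equiv> H \<inter> K1"
  assumes "Factorial_Ring.prime p" and "Factorial_Ring.prime q" and "p \<noteq> q"
    and "rcc_loop L m e" and "card L = p * q"
    and "subgroup K \<G>" and "H \<subset> K" and "K \<subset> G"
    and "card G = q * card K" and "card K = p * card H"
  shows "rcc_loop_folder (\<G>\<lparr>carrier := K1\<rparr>) H1 T1 \<and> card T1 = p
    \<and> comm_group (\<G>\<lparr>carrier := K1\<rparr>)
    \<and> K1 \<lhd> \<G>\<lparr>carrier := K\<rparr>
    \<and> K = H <#>\<^bsub>\<G>\<^esub> K1
    \<and> H1 \<lhd> \<G>\<lparr>carrier := K\<rparr>"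
proof -
  have "rcc_envelope_prime_index \<G> L m e K p"
    unfolding rcc_envelope_prime_index_def rcc_envelope_prime_index_axioms_def
      rcc_envelope_over_def rcc_envelope_over_axioms_def rcc_envelope_def rcc_envelope_axioms_def
    using group_RBijGroup \<open>Factorial_Ring.prime p\<close> \<open>rcc_loop L m e\<close> \<open>subgroup K \<G>\<close>
      \<open>H \<subset> K\<close> \<open>K \<subset> G\<close> \<open>card K = p * card H\<close>
    unfolding \<G>_def G_def H_def by auto
  then interpret rcc_envelope_prime_index \<G> L m e K p .
  show ?thesis
    using rcc_loop_folder_K1 card_T1 comm_group_K1 K1_normal_K K_eq_H_K1 H1_normal_K
    unfolding T1_def K1_def H1_def T_def H_def by blast
qed

end
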